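(* Let $j \geq 2$ be an integer and let $(S^{2j}, g)$ be the standard $2j$-dimensional round sphere of constant sectional curvature $1$. Then even, $G_t$-invariant complex measures on the unit tangent bundle $S(S^{2j})$ are not determined by their projection to $S^{2j}$: there exist two distinct even, $G_t$-invariant complex measures on $S(S^{2j})$ with the same projection to $S^{2j}$. In particular, there exists a non-zero, even, $G_t$-invariant finite real (signed) measure $\mu$ on $S(S^{2j})$ whose projection to $S^{2j}$ is zero, i.e. $\mu(\pi^{-1}(A)) = 0$ for every Borel set $A \subseteq S^{2j}$. *)

theory Defs
  imports "HOL-Analysis.Analysis"
begin

text \<open>The round unit sphere S^n sits in R^(n+1) = real^'n with CARD('n) = n+1.
  Its unit tangent bundle is the set of pairs (x,v) with |x| = |v| = 1, x.v = 0.\<close>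

definition unit_sphere :: "(real^'n) set" where
  "unit_sphere = {x. norm x = 1}"

definition unit_tangent_bundle :: "((real^'n) \<times> (real^'n)) set" where
  "unit_tangent_bundle = {(x, v). norm x = 1 \<and> norm v = 1 \<and> inner x v = 0}"

definition UTB_space :: "((real^'n) \<times> (real^'n)) measure" where
  "UTB_space = restrict_space borel unit_tangent_bundle"

definition sphere_space :: "(real^'n) measure" where
  "sphere_space = restrict_space borel unit_sphere"

definition geodesic_flow :: "real \<Rightarrow> (real^'n) \<times> (real^'n) \<Rightarrow> (real^'n) \<times> (real^'n)" where
  "geodesic_flow t = (\<lambda>(x, v). (cos t *\<^sub>R x + sin t *\<^sub>R v, (- sin t) *\<^sub>R x + cos t *\<^sub>R v))"

definition flip_map :: "(real^'n) \<times> (real^'n) \<Rightarrow> (real^'n) \<times> (real^'n)" where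
  "flip_map = (\<lambda>(x, v). (x, - v))"

definition bundle_proj :: "(real^'n) \<times> (real^'n) \<Rightarrow> real^'n" where
  "bundle_proj = fst"

text \<open>A complex measure (resp. finite real signed measure) on a measurable space M:
  a countably additive set function on sets M with values in 'a.
  Values outside sets M are irrelevant.\<close>
definition countably_additive_on :: "'b measure \<Rightarrow> ('b set \<Rightarrow> 'a::real_normed_vector) \<Rightarrow> bool" where
  "countably_additive_on M \<nu> \<longleftrightarrow>
     (\<forall>A :: nat \<Rightarrow> 'b set. range A \<subseteq> sets M \<longrightarrow> disjoint_family A \<longrightarrow>
        (\<lambda>i. \<nu> (A i)) sums \<nu> (\<Union>i. A i))"

abbreviation complex_measure_on :: "'b measure \<Rightarrow> ('b set \<Rightarrow> complex) \<Rightarrow> bool" where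
  "complex_measure_on M \<nu> \<equiv> countably_additive_on M \<nu>"

abbreviation signed_measure_on :: "'b measure \<Rightarrow> ('b set \<Rightarrow> real) \<Rightarrow> bool" where
  "signed_measure_on M \<nu> \<equiv> countably_additive_on M \<nu>"

definition even_measure :: "(((real^'n) \<times> (real^'n)) set \<Rightarrow> 'a) \<Rightarrow> bool" where
  "even_measure \<nu> \<longleftrightarrow>
     (\<forall>A\<in>sets UTB_space. \<nu> (flip_map -` A \<inter> unit_tangent_bundle) = \<nu> A)"

definition flow_invariant :: "(((real^'n) \<times> (real^'n)) set \<Rightarrow> 'a) \<Rightarrow> bool" where
  "flow_invariant \<nu> \<longleftrightarrow>
     (\<forall>t. \<forall>A\<in>sets UTB_space. \<nu> (geodesic_flow t -` A \<inter> unit_tangent_bundle) = \<nu> A)"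

definition proj_measure :: "(((real^'n) \<times> (real^'n)) set \<Rightarrow> 'a) \<Rightarrow> (real^'n) set \<Rightarrow> 'a" where
  "proj_measure \<nu> A = \<nu> (bundle_proj -` A \<inter> unit_tangent_bundle)"

end

(*
  Identify R^4 with C^2 and embed it isometrically into R^(2j+1) along four coordinates. For an
  orthogonal complex structure J on R^4, the map x |-> (x/|x|, Jx/|x|) sends the punctured unit
  ball into the unit tangent bundle, onto the unit vectors tangent to the great circles
  t |-> cos t x + sin t Jx. Through this map the geodesic flow becomes the rotation
  x |-> cos t x + sin t Jx, which is orthogonal, and the flip becomes J |-> -J. Hence the
  push-forward of Lebesgue measure, symmetrised over +J and -J, is an even, flow-invariant finite
  measure, and its projection to the sphere is the push-forward under x |-> x/|x|, independent
  of J. Multiplication by i on C x C and on C x conj(C) are two such structures of opposite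
  orientation; the difference of their measures is even, invariant and has zero projection. It
  is nonzero on the set of vectors (x, ix): that set has full mass for the first structure, while
  the second one agrees with +i or -i only on a proper coordinate subspace, a null set.
*)

theory Submission
  imports Defs
begin

lemma countably_additive_on_mono_sets:
  assumes "countably_additive_on N \<nu>" "sets M \<subseteq> sets N"
  shows "countably_additive_on M \<nu>"
  using assms unfolding countably_additive_on_def by blast

lemma countably_additive_on_diff:
  assumes "countably_additive_on M \<nu>" "countably_additive_on M \<nu>'"
  shows "countably_additive_on M (\<lambda>A. \<nu> A - \<nu>' A)"
  using assms unfolding countably_additive_on_def by (metis sums_diff)

lemma countably_additive_on_add:
  assumes "countably_additive_on M \<nu>" "countably_additive_on M \<nu>'"
  shows "countably_additive_on M (\<lambda>A. \<nu> A + \<nu>' A)"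
  using assms unfolding countably_additive_on_def by (metis sums_add)

lemma countably_additive_on_of_real:
  "countably_additive_on M \<nu> \<Longrightarrow> countably_additive_on M (\<lambda>A. of_real (\<nu> A) :: 'a::real_normed_algebra_1)"
  unfolding countably_additive_on_def by (simp add: sums_of_real)

lemma countably_additive_on_measure_vimage:
  assumes f: "f \<in> measurable M N" and U: "U \<in> sets M" "emeasure M U \<noteq> \<infinity>"
  shows "countably_additive_on N (\<lambda>A. measure M (f -` A \<inter> U))"
  unfolding countably_additive_on_def
proof (intro allI impI)
  fix A :: "nat \<Rightarrow> _" assume A: "range A \<subseteq> sets N" "disjoint_family A"
  have sets: "f -` A i \<inter> U \<in> sets M" for i
  proof -
    have "f -` A i \<inter> U = (f -` A i \<inter> space M) \<inter> U"
      using sets.sets_into_space[OF U(1)] by blast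
    then show ?thesis
      using A(1) by (auto intro!: sets.Int measurable_sets[OF f] U(1))
  qed
  have "(\<lambda>i. measure M (f -` A i \<inter> U)) sums measure M (\<Union>i. f -` A i \<inter> U)"
  proof (rule measure_UNION)
    show "range (\<lambda>i. f -` A i \<inter> U) \<subseteq> sets M"
      using sets by blast
    show "disjoint_family (\<lambda>i. f -` A i \<inter> U)"
      using A(2) unfolding disjoint_family_on_def by blast
    have "emeasure M (\<Union>i. f -` A i \<inter> U) \<le> emeasure M U"
      using sets U(1) by (intro emeasure_mono) auto
    then show "emeasure M (\<Union>i. f -` A i \<inter> U) \<noteq> \<infinity>"
      using U(2) by (auto simp: top_unique)
  qed
  also have "(\<Union>i. f -` A i \<inter> U) = f -` (\<Union>i. A i) \<inter> U"
    by blast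
  finally show "(\<lambda>i. measure M (f -` A i \<inter> U)) sums measure M (f -` (\<Union>i. A i) \<inter> U)" .
qed

lemma closed_unit_tangent_bundle: "closed (unit_tangent_bundle :: ((real^'n) \<times> (real^'n)) set)"
proof -
  have "unit_tangent_bundle = {p :: (real^'n) \<times> (real^'n). norm (fst p) = 1 \<and> norm (snd p) = 1 \<and> fst p \<bullet> snd p = 0}"
    by (auto simp: unit_tangent_bundle_def)
  also have "closed \<dots>"
    by (intro closed_Collect_conj closed_Collect_eq continuous_intros)
  finally show ?thesis .
qed

lemma sets_UTB_space:
  "A \<in> sets (UTB_space :: ((real^'n) \<times> (real^'n)) measure) \<longleftrightarrow>
     A \<subseteq> unit_tangent_bundle \<and> A \<in> sets borel"
  unfolding UTB_space_def
  by (rule sets_restrict_space_iff) (simp add: borel_closed closed_unit_tangent_bundle)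

lemma graph_in_sets_UTB_space:
  fixes G :: "real^'n \<Rightarrow> real^'n"
  assumes "linear G"
  shows "{p \<in> unit_tangent_bundle. snd p = G (fst p)} \<in> sets UTB_space"
proof -
  have "continuous_on UNIV G"
    using assms by (simp add: linear_continuous_on linear_conv_bounded_linear)
  then have "closed {p :: (real^'n) \<times> (real^'n). snd p = G (fst p)}"
    by (intro closed_Collect_eq continuous_on_snd continuous_on_id
        continuous_on_compose2[OF _ continuous_on_fst[OF continuous_on_id]]) auto
  then show ?thesis
    unfolding sets_UTB_space using closed_unit_tangent_bundle
    by (simp add: Collect_conj_eq) (intro borel_closed closed_Int)
qed

lemma measure_orthogonal_vimage_Int_ball:
  fixes f :: "(real, 'm::{finite,wellorder}) vec \<Rightarrow> (real, 'm) vec"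
  assumes f: "orthogonal_transformation f" and S: "S \<in> sets borel"
  shows "measure lborel (f -` S \<inter> ball 0 r) = measure lborel (S \<inter> ball 0 r)"
proof -
  have T: "S \<inter> ball 0 r \<in> sets borel" using S by auto
  have f_meas: "f \<in> borel_measurable borel"
    using orthogonal_transformation_linear[OF f]
    by (auto intro!: borel_measurable_continuous_onI linear_continuous_on
        simp: linear_conv_bounded_linear)
  have "f -` S \<inter> ball 0 r = f -` (S \<inter> ball 0 r)"
    using orthogonal_transformation_norm[OF f] by auto
  also have "\<dots> = inv f ` (S \<inter> ball 0 r)"
    by (rule bij_vimage_eq_inv_image[OF orthogonal_transformation_bij[OF f]])
  finally have eq: "f -` S \<inter> ball 0 r = inv f ` (S \<inter> ball 0 r)" .
  have "measure lborel (f -` S \<inter> ball 0 r) = measure lebesgue (f -` S \<inter> ball 0 r)"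
    using f_meas S by (simp add: measurable_sets_borel sets.Int)
  also have "\<dots> = measure lebesgue (S \<inter> ball 0 r)"
    unfolding eq
    by (rule measure_orthogonal_image[OF orthogonal_transformation_inv[OF f]],
        rule bounded_set_imp_lmeasurable) (use T in \<open>auto intro: sets_completionI_sets\<close>)
  also have "\<dots> = measure lborel (S \<inter> ball 0 r)"
    using T by simp
  finally show ?thesis .
qed

lemma measure_lborel_negligible:
  fixes S :: "'a::euclidean_space set"
  assumes "negligible S"
  shows "measure lborel S = 0"
proof (cases "S \<in> sets lborel")
  case True
  then show ?thesis
    using negligible_imp_measure0[OF assms] by simp
qed (rule measure_notin_sets)

definition hopf_lift ::
    "('a::real_normed_vector \<Rightarrow> 'b::real_normed_vector) \<Rightarrow> ('a \<Rightarrow> 'a) \<Rightarrow> 'a \<Rightarrow> 'b \<times> 'b" where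
  "hopf_lift E J x = (inverse (norm x) *\<^sub>R E x, inverse (norm x) *\<^sub>R E (J x))"

definition hopf_measure ::
    "('a::euclidean_space \<Rightarrow> 'b::real_normed_vector) \<Rightarrow> ('a \<Rightarrow> 'a) \<Rightarrow> ('b \<times> 'b) set \<Rightarrow> real" where
  "hopf_measure E J A = measure lborel (hopf_lift E J -` A \<inter> ball 0 1)"

definition even_hopf_measure ::
    "('a::euclidean_space \<Rightarrow> 'b::real_normed_vector) \<Rightarrow> ('a \<Rightarrow> 'a) \<Rightarrow> ('b \<times> 'b) set \<Rightarrow> real" where
  "even_hopf_measure E J A = hopf_measure E J A + hopf_measure E (\<lambda>x. - J x) A"

definition complex_rotation :: "('a::real_vector \<Rightarrow> 'a) \<Rightarrow> real \<Rightarrow> 'a \<Rightarrow> 'a" where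
  "complex_rotation J t x = cos t *\<^sub>R x + sin t *\<^sub>R J x"

locale isometric_complex_embedding =
  fixes E :: "(real, 'm::{finite,wellorder}) vec \<Rightarrow> real^'n"
    and J :: "(real, 'm) vec \<Rightarrow> (real, 'm) vec"
  assumes linear_E: "linear E"
    and inner_E: "\<And>x y. E x \<bullet> E y = x \<bullet> y"
    and orthogonal_J: "orthogonal_transformation J"
    and J_J: "\<And>x. J (J x) = - x"
begin

lemma linear_J: "linear J"
  using orthogonal_J by (rule orthogonal_transformation_linear)

lemma norm_E: "norm (E x) = norm x"
  by (simp add: norm_eq_sqrt_inner inner_E)

lemma norm_J: "norm (J x) = norm x"
  using orthogonal_J by (rule orthogonal_transformation_norm)

lemma inner_J_self: "x \<bullet> J x = 0"
proof -
  have "x \<bullet> J x = J x \<bullet> J (J x)"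
    using orthogonal_J by (simp add: orthogonal_transformation_def inner_commute)
  also have "\<dots> = - (x \<bullet> J x)"
    by (simp add: J_J inner_commute)
  finally show ?thesis by simp
qed

lemma E_eq_iff: "E x = E y \<longleftrightarrow> x = y"
  using norm_E[of "x - y"] by (auto simp: linear_diff[OF linear_E])

lemma negated: "isometric_complex_embedding E (\<lambda>x. - J x)"
  by (rule isometric_complex_embedding.intro)
    (simp_all add: linear_E inner_E orthogonal_transformation_neg orthogonal_J
      linear_neg[OF linear_J] J_J)

lemma hopf_lift_in_unit_tangent_bundle_iff:
  "hopf_lift E J x \<in> unit_tangent_bundle \<longleftrightarrow> x \<noteq> 0"
proof
  assume "x \<noteq> 0"
  have "E x \<bullet> E (J x) = 0"
    by (simp add: inner_E inner_J_self)
  with \<open>x \<noteq> 0\<close> show "hopf_lift E J x \<in> unit_tangent_bundle"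
    by (simp add: hopf_lift_def unit_tangent_bundle_def norm_E norm_J)
qed (auto simp: hopf_lift_def unit_tangent_bundle_def)

lemma hopf_lift_measurable: "hopf_lift E J \<in> borel_measurable borel"
proof -
  have "E \<in> borel_measurable borel" "J \<in> borel_measurable borel"
    using linear_E linear_J
    by (auto intro!: borel_measurable_continuous_onI linear_continuous_on
        simp: linear_conv_bounded_linear)
  then show ?thesis
    unfolding hopf_lift_def[abs_def] borel_prod[symmetric] by measurable
qed

lemma countably_additive_hopf_measure: "countably_additive_on borel (hopf_measure E J)"
  unfolding hopf_measure_def[abs_def]
  using hopf_lift_measurable emeasure_lborel_ball_finite[of "0 :: (real, 'm) vec" 1]
  by (intro countably_additive_on_measure_vimage) auto

lemma orthogonal_complex_rotation: "orthogonal_transformation (complex_rotation J t)"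
  unfolding orthogonal_transformation
proof (intro conjI allI)
  show "linear (complex_rotation J t)"
    by (rule linearI) (simp_all add: complex_rotation_def linear_add[OF linear_J]
        linear_scale[OF linear_J] algebra_simps)
  fix x
  have "(norm (complex_rotation J t x))\<^sup>2 = (cos t)\<^sup>2 * (norm x)\<^sup>2 + (sin t)\<^sup>2 * (norm (J x))\<^sup>2"
    unfolding complex_rotation_def power2_norm_eq_inner using inner_J_self[of x]
    by (simp add: inner_add inner_commute algebra_simps power2_eq_square)
  also have "\<dots> = (norm x)\<^sup>2"
    by (simp add: norm_J algebra_simps sin_squared_eq)
  finally show "norm (complex_rotation J t x) = norm x"
    by (simp add: power2_eq_iff_nonneg)
qed

lemma norm_complex_rotation [simp]: "norm (complex_rotation J t x) = norm x"
  using orthogonal_complex_rotation by (rule orthogonal_transformation_norm)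

lemma J_complex_rotation: "J (complex_rotation J t x) = cos t *\<^sub>R J x - sin t *\<^sub>R x"
  by (simp add: complex_rotation_def linear_add[OF linear_J] linear_scale[OF linear_J] J_J)

lemma geodesic_flow_hopf_lift:
  "geodesic_flow t (hopf_lift E J x) = hopf_lift E J (complex_rotation J t x)"
  unfolding hopf_lift_def geodesic_flow_def J_complex_rotation norm_complex_rotation
  by (simp add: complex_rotation_def linear_add[OF linear_E] linear_scale[OF linear_E]
      linear_diff[OF linear_E] algebra_simps)

lemma hopf_measure_geodesic_flow:
  assumes "A \<in> sets UTB_space"
  shows "hopf_measure E J (geodesic_flow t -` A \<inter> unit_tangent_bundle) = hopf_measure E J A"
proof -
  have A: "A \<subseteq> unit_tangent_bundle" "A \<in> sets borel"
    using assms by (simp_all add: sets_UTB_space)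
  have "hopf_lift E J -` (geodesic_flow t -` A \<inter> unit_tangent_bundle) =
      complex_rotation J t -` (hopf_lift E J -` A)"
  proof (intro set_eqI)
    fix x
    have "x \<noteq> 0" if "hopf_lift E J (complex_rotation J t x) \<in> A"
    proof -
      have "complex_rotation J t x \<noteq> 0"
        using that A(1) hopf_lift_in_unit_tangent_bundle_iff by blast
      then show ?thesis
        by (metis norm_complex_rotation norm_eq_zero)
    qed
    then show "x \<in> hopf_lift E J -` (geodesic_flow t -` A \<inter> unit_tangent_bundle) \<longleftrightarrow>
        x \<in> complex_rotation J t -` (hopf_lift E J -` A)"
      unfolding vimage_eq Int_iff geodesic_flow_hopf_lift hopf_lift_in_unit_tangent_bundle_iff
      by blast
  qed
  then show ?thesis
    unfolding hopf_measure_def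
    using measure_orthogonal_vimage_Int_ball[OF orthogonal_complex_rotation
        measurable_sets_borel[OF hopf_lift_measurable A(2)]]
    by simp
qed

lemma flip_hopf_lift: "flip_map (hopf_lift E J x) = hopf_lift E (\<lambda>x. - J x) x"
  by (simp add: flip_map_def hopf_lift_def linear_neg[OF linear_E])

lemma hopf_measure_flip:
  assumes "A \<in> sets UTB_space"
  shows "hopf_measure E J (flip_map -` A \<inter> unit_tangent_bundle) = hopf_measure E (\<lambda>x. - J x) A"
proof -
  have "A \<subseteq> unit_tangent_bundle"
    using assms by (simp add: sets_UTB_space)
  then have "hopf_lift E J -` (flip_map -` A \<inter> unit_tangent_bundle) = hopf_lift E (\<lambda>x. - J x) -` A"
    unfolding set_eq_iff vimage_eq Int_iff flip_hopf_lift hopf_lift_in_unit_tangent_bundle_iff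
    using isometric_complex_embedding.hopf_lift_in_unit_tangent_bundle_iff[OF negated]
    by blast
  then show ?thesis
    by (simp add: hopf_measure_def)
qed

lemma hopf_measure_bundle_proj:
  "hopf_measure E J (bundle_proj -` A \<inter> unit_tangent_bundle) =
     measure lborel {x \<in> ball 0 1. x \<noteq> 0 \<and> inverse (norm x) *\<^sub>R E x \<in> A}"
proof -
  have proj: "bundle_proj (hopf_lift E J x) = inverse (norm x) *\<^sub>R E x" for x
    by (simp add: bundle_proj_def hopf_lift_def)
  have "hopf_lift E J -` (bundle_proj -` A \<inter> unit_tangent_bundle) \<inter> ball 0 1 =
      {x \<in> ball 0 1. x \<noteq> 0 \<and> inverse (norm x) *\<^sub>R E x \<in> A}"
    unfolding set_eq_iff vimage_eq Int_iff mem_Collect_eq proj hopf_lift_in_unit_tangent_bundle_iff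
    by blast
  then show ?thesis
    by (simp add: hopf_measure_def)
qed

lemma signed_measure_even_hopf_measure: "signed_measure_on UTB_space (even_hopf_measure E J)"
proof -
  have "sets UTB_space \<subseteq> sets (borel :: ((real^'n) \<times> (real^'n)) measure)"
    by (auto simp: sets_UTB_space)
  then show ?thesis
    unfolding even_hopf_measure_def[abs_def]
    by (intro countably_additive_on_add countably_additive_on_mono_sets[OF countably_additive_hopf_measure]
        countably_additive_on_mono_sets[OF isometric_complex_embedding.countably_additive_hopf_measure[OF negated]])
qed

lemma even_even_hopf_measure: "even_measure (even_hopf_measure E J)"
  unfolding even_measure_def even_hopf_measure_def
  by (simp add: hopf_measure_flip isometric_complex_embedding.hopf_measure_flip[OF negated])

lemma flow_invariant_even_hopf_measure: "flow_invariant (even_hopf_measure E J)"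
  unfolding flow_invariant_def even_hopf_measure_def
  by (simp add: hopf_measure_geodesic_flow
      isometric_complex_embedding.hopf_measure_geodesic_flow[OF negated])

lemma proj_even_hopf_measure:
  "proj_measure (even_hopf_measure E J) A =
     2 * measure lborel {x \<in> ball 0 1. x \<noteq> 0 \<and> inverse (norm x) *\<^sub>R E x \<in> A}"
  unfolding proj_measure_def even_hopf_measure_def
  by (simp add: hopf_measure_bundle_proj isometric_complex_embedding.hopf_measure_bundle_proj[OF negated])

lemma minus_J_eq_J_iff: "- J x = J x \<longleftrightarrow> x = 0"
proof
  assume "- J x = J x"
  then have "2 *\<^sub>R J x = 0"
    by (metis scaleR_2 add.right_inverse)
  then show "x = 0"
    using norm_J[of x] by simp
qed (simp add: linear_0[OF linear_J])

lemma hopf_measure_graph: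
  assumes "linear G" and G_E: "\<And>x. G (E x) = E (J' x)"
  shows "hopf_measure E J {p \<in> unit_tangent_bundle. snd p = G (fst p)} =
    measure lborel {x \<in> ball 0 1. x \<noteq> 0 \<and> J x = J' x}"
proof -
  have "hopf_lift E J x \<in> {p \<in> unit_tangent_bundle. snd p = G (fst p)} \<longleftrightarrow> x \<noteq> 0 \<and> J x = J' x" for x
  proof (cases "x = 0")
    case False
    have "snd (hopf_lift E J x) = G (fst (hopf_lift E J x)) \<longleftrightarrow>
        inverse (norm x) *\<^sub>R E (J x) = inverse (norm x) *\<^sub>R E (J' x)"
      by (simp add: hopf_lift_def linear_scale[OF \<open>linear G\<close>] G_E)
    also have "\<dots> \<longleftrightarrow> J x = J' x"
      using False by (simp add: E_eq_iff)
    finally show ?thesis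
      using False hopf_lift_in_unit_tangent_bundle_iff by simp
  qed (simp add: hopf_lift_in_unit_tangent_bundle_iff)
  then show ?thesis
    unfolding hopf_measure_def by (intro arg_cong[where f = "measure lborel"]) blast
qed

end

lemma difference_of_even_hopf_measures:
  assumes J: "isometric_complex_embedding E J" and K: "isometric_complex_embedding E K"
  defines "\<mu> \<equiv> \<lambda>A. even_hopf_measure E J A - even_hopf_measure E K A"
  shows "signed_measure_on UTB_space \<mu>" "even_measure \<mu>" "flow_invariant \<mu>"
    and "proj_measure \<mu> A = 0"
proof -
  interpret J: isometric_complex_embedding E J by (rule J)
  interpret K: isometric_complex_embedding E K by (rule K)
  show "signed_measure_on UTB_space \<mu>"
    unfolding \<mu>_def
    by (intro countably_additive_on_diff J.signed_measure_even_hopf_measure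
        K.signed_measure_even_hopf_measure)
  show "even_measure \<mu>"
    using J.even_even_hopf_measure K.even_even_hopf_measure
    by (simp add: \<mu>_def even_measure_def)
  show "flow_invariant \<mu>"
    using J.flow_invariant_even_hopf_measure K.flow_invariant_even_hopf_measure
    by (simp add: \<mu>_def flow_invariant_def)
  show "proj_measure \<mu> A = 0"
    using J.proj_even_hopf_measure K.proj_even_hopf_measure
    by (simp add: \<mu>_def proj_measure_def)
qed

definition coordinate_embedding :: "('m::finite \<Rightarrow> 'n::finite) \<Rightarrow> real^'m \<Rightarrow> real^'n" where
  "coordinate_embedding \<iota> y = (\<chi> i. if i \<in> range \<iota> then y $ inv \<iota> i else 0)"

definition coordinate_restriction :: "('m::finite \<Rightarrow> 'n::finite) \<Rightarrow> real^'n \<Rightarrow> real^'m" where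
  "coordinate_restriction \<iota> x = (\<chi> k. x $ \<iota> k)"

lemma linear_coordinate_embedding: "linear (coordinate_embedding \<iota>)"
  by (rule linearI) (auto simp: coordinate_embedding_def vec_eq_iff)

lemma linear_coordinate_restriction: "linear (coordinate_restriction \<iota>)"
  by (rule linearI) (auto simp: coordinate_restriction_def vec_eq_iff)

lemma coordinate_restriction_embedding:
  "inj \<iota> \<Longrightarrow> coordinate_restriction \<iota> (coordinate_embedding \<iota> y) = y"
  by (simp add: coordinate_restriction_def coordinate_embedding_def vec_eq_iff)

lemma inner_coordinate_embedding:
  assumes "inj \<iota>"
  shows "coordinate_embedding \<iota> x \<bullet> coordinate_embedding \<iota> y = x \<bullet> y"
proof -
  have "coordinate_embedding \<iota> x \<bullet> coordinate_embedding \<iota> y =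
      (\<Sum>i\<in>range \<iota>. coordinate_embedding \<iota> x $ i * coordinate_embedding \<iota> y $ i)"
    unfolding inner_vec_def inner_real_def
    by (rule sum.mono_neutral_right) (auto simp: coordinate_embedding_def)
  also have "\<dots> = (\<Sum>k\<in>UNIV. x $ k * y $ k)"
    using assms by (simp add: sum.reindex coordinate_embedding_def)
  finally show ?thesis
    by (simp add: inner_vec_def inner_real_def)
qed

lemma isometric_complex_embedding_coordinate_embedding:
  assumes "inj \<iota>" and "orthogonal_transformation J" and "\<And>x. J (J x) = - x"
  shows "isometric_complex_embedding (coordinate_embedding \<iota>) J"
proof (rule isometric_complex_embedding.intro)
  show "linear (coordinate_embedding \<iota>)"
    by (rule linear_coordinate_embedding)
  show "coordinate_embedding \<iota> x \<bullet> coordinate_embedding \<iota> y = x \<bullet> y" for x y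
    using assms(1) by (rule inner_coordinate_embedding)
qed (rule assms)+

(* R^4 is C^2 via (x1 + i x2, x3 + i x4): i_mult multiplies both factors by i,
   i_mult_conj the first by i and the second by -i. *)
definition i_mult :: "real^4 \<Rightarrow> real^4" where
  "i_mult x = (\<chi> i. if i = 1 then - x$2 else if i = 2 then x$1 else if i = 3 then - x$4 else x$3)"

definition i_mult_conj :: "real^4 \<Rightarrow> real^4" where
  "i_mult_conj x = (\<chi> i. if i = 1 then - x$2 else if i = 2 then x$1 else if i = 3 then x$4 else - x$3)"

lemma orthogonal_i_mult: "orthogonal_transformation i_mult"
  unfolding orthogonal_transformation
  by (auto intro!: linearI simp: i_mult_def vec_eq_iff forall_4 norm_eq_sqrt_inner inner_vec_def
      sum_4 algebra_simps)

lemma orthogonal_i_mult_conj: "orthogonal_transformation i_mult_conj"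
  unfolding orthogonal_transformation
  by (auto intro!: linearI simp: i_mult_conj_def vec_eq_iff forall_4 norm_eq_sqrt_inner inner_vec_def
      sum_4 algebra_simps)

lemma i_mult_i_mult: "i_mult (i_mult x) = - x"
  by (simp add: i_mult_def vec_eq_iff forall_4)

lemma i_mult_conj_i_mult_conj: "i_mult_conj (i_mult_conj x) = - x"
  by (simp add: i_mult_conj_def vec_eq_iff forall_4)

lemma isometric_complex_embedding_i_mult:
  assumes "inj \<iota>"
  shows "isometric_complex_embedding (coordinate_embedding \<iota>) i_mult"
  using assms orthogonal_i_mult i_mult_i_mult
  by (rule isometric_complex_embedding_coordinate_embedding)

lemma isometric_complex_embedding_i_mult_conj:
  assumes "inj \<iota>"
  shows "isometric_complex_embedding (coordinate_embedding \<iota>) i_mult_conj"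
  using assms orthogonal_i_mult_conj i_mult_conj_i_mult_conj
  by (rule isometric_complex_embedding_coordinate_embedding)

lemma i_mult_conj_eq_i_mult_iff: "i_mult_conj x = i_mult x \<longleftrightarrow> x$3 = 0 \<and> x$4 = 0"
  by (auto simp: i_mult_conj_def i_mult_def vec_eq_iff forall_4)

lemma minus_i_mult_conj_eq_i_mult_iff: "- i_mult_conj x = i_mult x \<longleftrightarrow> x$1 = 0 \<and> x$2 = 0"
  by (auto simp: i_mult_conj_def i_mult_def vec_eq_iff forall_4)

lemma even_hopf_measures_on_i_mult_graph:
  fixes \<iota> :: "4 \<Rightarrow> 'n::finite"
  assumes "inj \<iota>"
  defines "E \<equiv> coordinate_embedding \<iota>"
  defines "B \<equiv> {p \<in> unit_tangent_bundle. snd p = E (i_mult (coordinate_restriction \<iota> (fst p)))}"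
  shows "B \<in> sets UTB_space"
    and "even_hopf_measure E i_mult B = measure lborel (ball 0 1 :: (real^4) set)"
    and "even_hopf_measure E i_mult_conj B = 0"
proof -
  interpret J: isometric_complex_embedding E i_mult
    unfolding E_def using assms(1) by (rule isometric_complex_embedding_i_mult)
  interpret K: isometric_complex_embedding E i_mult_conj
    unfolding E_def using assms(1) by (rule isometric_complex_embedding_i_mult_conj)
  interpret J': isometric_complex_embedding E "\<lambda>x. - i_mult x"
    by (rule J.negated)
  interpret K': isometric_complex_embedding E "\<lambda>x. - i_mult_conj x"
    by (rule K.negated)
  have G_linear: "linear (\<lambda>x. E (i_mult (coordinate_restriction \<iota> x)))"
    using linear_compose[OF linear_compose[OF linear_coordinate_restriction J.linear_J] J.linear_E]
    by (simp add: o_def)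
  then show "B \<in> sets UTB_space"
    unfolding B_def by (rule graph_in_sets_UTB_space)
  have G_E: "E (i_mult (coordinate_restriction \<iota> (E x))) = E (i_mult x)" for x
    using assms(1) by (simp add: E_def coordinate_restriction_embedding)
  note graph = J.hopf_measure_graph[OF G_linear G_E, folded B_def]
    J'.hopf_measure_graph[OF G_linear G_E, folded B_def]
    K.hopf_measure_graph[OF G_linear G_E, folded B_def]
    K'.hopf_measure_graph[OF G_linear G_E, folded B_def]
  have "{x \<in> ball 0 1. x \<noteq> 0 \<and> i_mult x = i_mult x} = ball 0 1 - {0}"
    by auto
  moreover have "{x \<in> ball 0 1. x \<noteq> 0 \<and> - i_mult x = i_mult x} = {}"
    unfolding J.minus_J_eq_J_iff by auto
  ultimately show "even_hopf_measure E i_mult B = measure lborel (ball 0 1 :: (real^4) set)"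
    unfolding even_hopf_measure_def graph
    by (simp only: measure_Diff_null_set finite_imp_null_set_lborel finite.intros sets_lborel
        borel_open open_ball measure_empty add_0_right)
  have "negligible {x \<in> ball 0 1. x \<noteq> 0 \<and> i_mult_conj x = i_mult x}"
    by (rule negligible_subset[OF negligible_standard_hyperplane_cart[of 3]])
      (simp add: i_mult_conj_eq_i_mult_iff subset_iff)
  moreover have "negligible {x \<in> ball 0 1. x \<noteq> 0 \<and> - i_mult_conj x = i_mult x}"
    by (rule negligible_subset[OF negligible_standard_hyperplane_cart[of 1]])
      (simp add: minus_i_mult_conj_eq_i_mult_iff subset_iff)
  ultimately show "even_hopf_measure E i_mult_conj B = 0"
    unfolding even_hopf_measure_def graph by (simp add: measure_lborel_negligible)
qed

lemma exists_even_flow_invariant_measure_with_zero_projection: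
  assumes "CARD('n::finite) \<ge> 4"
  shows "\<exists>\<mu> :: ((real^'n) \<times> (real^'n)) set \<Rightarrow> real.
    signed_measure_on UTB_space \<mu> \<and> even_measure \<mu> \<and> flow_invariant \<mu> \<and>
    (\<exists>B\<in>sets UTB_space. \<mu> B \<noteq> 0) \<and> (\<forall>A. proj_measure \<mu> A = 0)"
proof -
  obtain \<iota> :: "4 \<Rightarrow> 'n" where "inj \<iota>"
    using card_le_inj[of "UNIV :: 4 set" "UNIV :: 'n set"] assms by auto
  define E where "E = coordinate_embedding \<iota>"
  define \<mu> where "\<mu> A = even_hopf_measure E i_mult A - even_hopf_measure E i_mult_conj A" for A
  note \<mu>_props = difference_of_even_hopf_measures[OF
      isometric_complex_embedding_i_mult[OF \<open>inj \<iota>\<close>]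
      isometric_complex_embedding_i_mult_conj[OF \<open>inj \<iota>\<close>],
      folded E_def, folded \<mu>_def[abs_def]]
  let ?B = "{p \<in> unit_tangent_bundle. snd p = E (i_mult (coordinate_restriction \<iota> (fst p)))}"
  note B = even_hopf_measures_on_i_mult_graph[OF \<open>inj \<iota>\<close>, folded E_def]
  have "\<mu> ?B \<noteq> 0"
    using B(2,3) content_ball_pos[of 1 "0 :: real^4"] by (simp add: \<mu>_def)
  with B(1) show ?thesis
    using \<mu>_props by blast
qed

theorem theorem3:
  fixes j :: nat
  assumes "j \<ge> 2" and "CARD('n::finite) = 2 * j + 1"
  shows "(\<exists>\<mu>1 \<mu>2 :: ((real^'n) \<times> (real^'n)) set \<Rightarrow> complex.
            complex_measure_on UTB_space \<mu>1 \<and> complex_measure_on UTB_space \<mu>2 \<and>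
            even_measure \<mu>1 \<and> even_measure \<mu>2 \<and>
            flow_invariant \<mu>1 \<and> flow_invariant \<mu>2 \<and>
            (\<forall>A\<in>sets (sphere_space :: (real^'n) measure). proj_measure \<mu>1 A = proj_measure \<mu>2 A) \<and>
            (\<exists>B\<in>sets UTB_space. \<mu>1 B \<noteq> \<mu>2 B))
       \<and> (\<exists>\<mu> :: ((real^'n) \<times> (real^'n)) set \<Rightarrow> real.
            signed_measure_on UTB_space \<mu> \<and> even_measure \<mu> \<and> flow_invariant \<mu> \<and>
            (\<exists>B\<in>sets UTB_space. \<mu> B \<noteq> 0) \<and>
            (\<forall>A\<in>sets (borel :: (real^'n) measure). proj_measure \<mu> A = 0))"
proof -
  have "CARD('n) \<ge> 4"
    using assms by simp
  then obtain \<mu> :: "((real^'n) \<times> (real^'n)) set \<Rightarrow> real"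
    where \<mu>: "signed_measure_on UTB_space \<mu>" "even_measure \<mu>" "flow_invariant \<mu>"
      "\<exists>B\<in>sets UTB_space. \<mu> B \<noteq> 0" "\<forall>A. proj_measure \<mu> A = 0"
    using exists_even_flow_invariant_measure_with_zero_projection by blast
  let ?\<mu>1 = "\<lambda>A. complex_of_real (\<mu> A)" and ?\<mu>2 = "\<lambda>A :: ((real^'n) \<times> (real^'n)) set. 0 :: complex"
  have \<mu>1: "complex_measure_on UTB_space ?\<mu>1"
    using \<mu>(1) by (rule countably_additive_on_of_real)
  have \<mu>2: "complex_measure_on UTB_space ?\<mu>2"
    by (simp add: countably_additive_on_def)
  show ?thesis
  proof (rule conjI, goal_cases)
    case 1
    show ?case
      by (rule exI[of _ ?\<mu>1], rule exI[of _ ?\<mu>2])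
        (use \<mu> \<mu>1 \<mu>2 in \<open>simp add: even_measure_def flow_invariant_def proj_measure_def\<close>)
  next
    case 2
    show ?case
      using \<mu> by blast
  qed
qed

end
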